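(* Consider a one-way communication task in which Alice receives $x\in\{1,\dots,N\}$ uniformly at random, Bob receives $y\in\{1,\dots,M\}$ and outputs $z\in\{1,\dots,D\}$, with success metric $\mathcal{S}=\sum_{x,y,z}c(x,y,z)p(z|x,y)$ where $c(x,y,z)\ge0$ and $\sum_{x,y,z}c(x,y,z)=1$. A classical protocol consists of an encoding $p_e(m|x)$ over messages $m$ in a finite set and a decoding $p_d(z|y,m)$, with $p(z|x,y)=\sum_mp_e(m|x)p_d(z|y,m)$ and distinguishability $\mathcal{D}_C=\frac1N\sum_m\max_xp_e(m|x)$. Let $d_C\ge1$, let $\overline{\mathcal{S}}_{d_C}$ be the maximum of $\mathcal{S}$ over classical protocols whose message set has at most $d_C$ elements, and let $\mathcal{S}_C$ be the maximum of $\mathcal{S}$ over classical protocols (with message set of arbitrary finite size) whose distinguishability satisfies $\mathcal{D}_C\le d_C/N$. Then $\overline{\mathcal{S}}_{d_C}\le\mathcal{S}_C$. *)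

theory Defs
  imports Complex_Main
begin

text \<open>Inputs x < N (Alice), y < M (Bob), outputs z < D, messages m < K
  (a message set of K elements, w.l.o.g. {0..<K}).
  pe m x = p_e(m|x), pd z y m = p_d(z|y,m).\<close>

definition is_protocol ::
  "nat \<Rightarrow> nat \<Rightarrow> nat \<Rightarrow> nat \<Rightarrow> (nat \<Rightarrow> nat \<Rightarrow> real) \<Rightarrow> (nat \<Rightarrow> nat \<Rightarrow> nat \<Rightarrow> real) \<Rightarrow> bool" where
  "is_protocol N M D K pe pd \<longleftrightarrow>
     (\<forall>x<N. \<forall>m<K. 0 \<le> pe m x) \<and> (\<forall>x<N. (\<Sum>m<K. pe m x) = 1) \<and>
     (\<forall>y<M. \<forall>m<K. \<forall>z<D. 0 \<le> pd z y m) \<and> (\<forall>y<M. \<forall>m<K. (\<Sum>z<D. pd z y m) = 1)"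

definition success ::
  "(nat \<Rightarrow> nat \<Rightarrow> nat \<Rightarrow> real) \<Rightarrow> nat \<Rightarrow> nat \<Rightarrow> nat \<Rightarrow> nat \<Rightarrow> (nat \<Rightarrow> nat \<Rightarrow> real) \<Rightarrow> (nat \<Rightarrow> nat \<Rightarrow> nat \<Rightarrow> real) \<Rightarrow> real" where
  "success c N M D K pe pd =
     (\<Sum>x<N. \<Sum>y<M. \<Sum>z<D. c x y z * (\<Sum>m<K. pe m x * pd z y m))"

definition distinguishability :: "nat \<Rightarrow> nat \<Rightarrow> (nat \<Rightarrow> nat \<Rightarrow> real) \<Rightarrow> real" where
  "distinguishability N K pe = (1 / real N) * (\<Sum>m<K. Max ((\<lambda>x. pe m x) ` {..<N}))"

definition S_bar ::
  "(nat \<Rightarrow> nat \<Rightarrow> nat \<Rightarrow> real) \<Rightarrow> nat \<Rightarrow> nat \<Rightarrow> nat \<Rightarrow> nat \<Rightarrow> real" where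
  "S_bar c N M D dC = Sup {success c N M D K pe pd | K pe pd.
      is_protocol N M D K pe pd \<and> K \<le> dC}"

definition S_C ::
  "(nat \<Rightarrow> nat \<Rightarrow> nat \<Rightarrow> real) \<Rightarrow> nat \<Rightarrow> nat \<Rightarrow> nat \<Rightarrow> nat \<Rightarrow> real" where
  "S_C c N M D dC = Sup {success c N M D K pe pd | K pe pd.
      is_protocol N M D K pe pd \<and> distinguishability N K pe \<le> real dC / real N}"

end

theory Submission
  imports Defs
begin

text \<open>Every encoding probability is at most 1, so a protocol with K messages has
  distinguishability at most K/N. Hence every protocol counted in \<open>S_bar\<close> (K \<le> dC) is also
  counted in \<open>S_C\<close>, and the inequality of suprema follows because the success of any
  protocol is bounded by the total weight of c and a one-message protocol exists.\<close>

lemma is_protocol_encoding_le_one: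
  assumes "is_protocol N M D K pe pd" "x < N" "m < K"
  shows "pe m x \<le> 1"
proof -
  have "pe m x \<le> (\<Sum>m<K. pe m x)"
    by (rule member_le_sum) (use assms in \<open>auto simp: is_protocol_def\<close>)
  with assms show ?thesis by (auto simp: is_protocol_def)
qed

lemma is_protocol_decoding_le_one:
  assumes "is_protocol N M D K pe pd" "y < M" "m < K" "z < D"
  shows "pd z y m \<le> 1"
proof -
  have "pd z y m \<le> (\<Sum>z<D. pd z y m)"
    by (rule member_le_sum) (use assms in \<open>auto simp: is_protocol_def\<close>)
  with assms show ?thesis by (auto simp: is_protocol_def)
qed

lemma is_protocol_one_message:
  assumes "D > 0"
  shows "is_protocol N M D 1 (\<lambda>m x. 1) (\<lambda>z y m. if z = 0 then 1 else 0)"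
  using assms by (auto simp: is_protocol_def sum.If_cases lessThan_def)

lemma success_le_total_weight:
  assumes "is_protocol N M D K pe pd" and c_nonneg: "\<forall>x<N. \<forall>y<M. \<forall>z<D. 0 \<le> c x y z"
  shows "success c N M D K pe pd \<le> (\<Sum>x<N. \<Sum>y<M. \<Sum>z<D. c x y z)"
  unfolding success_def
proof (intro sum_mono)
  fix x y z assume x: "x \<in> {..<N}" and y: "y \<in> {..<M}" and z: "z \<in> {..<D}"
  have "(\<Sum>m<K. pe m x * pd z y m) \<le> (\<Sum>m<K. pe m x)"
    using assms(1) x y z is_protocol_decoding_le_one[OF assms(1)]
    by (intro sum_mono) (auto simp: is_protocol_def intro: mult_left_le)
  also have "\<dots> = 1" using assms(1) x by (auto simp: is_protocol_def)
  finally show "c x y z * (\<Sum>m<K. pe m x * pd z y m) \<le> c x y z"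
    using c_nonneg x y z by (simp add: mult_left_le)
qed

lemma distinguishability_le_card_messages:
  assumes "is_protocol N M D K pe pd"
  shows "distinguishability N K pe \<le> real K / real N"
proof (cases "N = 0")
  case False
  have "(\<Sum>m<K. Max ((\<lambda>x. pe m x) ` {..<N})) \<le> (\<Sum>m<K. 1)"
    using False is_protocol_encoding_le_one[OF assms]
    by (intro sum_mono) (subst Max_le_iff, auto simp: lessThan_empty_iff)
  then show ?thesis
    unfolding distinguishability_def by (simp add: divide_right_mono)
qed (simp add: distinguishability_def)

theorem mainTheorem9:
  fixes c :: "nat \<Rightarrow> nat \<Rightarrow> nat \<Rightarrow> real" and N M D dC :: nat
  assumes "\<forall>x<N. \<forall>y<M. \<forall>z<D. 0 \<le> c x y z"
    and "(\<Sum>x<N. \<Sum>y<M. \<Sum>z<D. c x y z) = 1"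
    and "dC \<ge> 1"
  shows "S_bar c N M D dC \<le> S_C c N M D dC"
  unfolding S_bar_def S_C_def
proof (rule cSup_subset_mono)
  have "D > 0" using assms(2) by (cases D) auto
  then show "{success c N M D K pe pd | K pe pd. is_protocol N M D K pe pd \<and> K \<le> dC} \<noteq> {}"
    using is_protocol_one_message assms(3) by blast
  show "bdd_above {success c N M D K pe pd | K pe pd.
      is_protocol N M D K pe pd \<and> distinguishability N K pe \<le> real dC / real N}"
    unfolding bdd_above_def using success_le_total_weight[OF _ assms(1)] by blast
  show "{success c N M D K pe pd | K pe pd. is_protocol N M D K pe pd \<and> K \<le> dC}
    \<subseteq> {success c N M D K pe pd | K pe pd.
      is_protocol N M D K pe pd \<and> distinguishability N K pe \<le> real dC / real N}"
    using distinguishability_le_card_messages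
    by (fastforce intro: order_trans divide_right_mono)
qed

end
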